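(* Let $(\mathcal{X},d)$ be a finite metric space with initial forest given by a partition $\mathcal{P}=\{P_1,\dots,P_t\}$ of $\mathcal{X}$ and spanning trees $T_i$ on the parts with edge union $E_t$, and let $\gamma=\gamma(\mathcal{P})$ be its overlap parameter. Let $R=\{R_i : i\in[t]\}$ with each $R_i\subseteq P_i$ nonempty, and set $$\alpha = 1+\frac{\mathrm{cost}(\mathcal{P},R)}{w_{\mathcal{X}}(E_t)}.$$ Then the spanning tree $\hat T$ returned by $\textsf{MultiRepMFC}(R)$ satisfies $w_{\mathcal{X}}(\hat T)\le \alpha\, w_{\mathcal{X}}(T^* )$, where $T^*$ is an optimal solution of the Metric Forest Completion problem (i.e. it is an $\alpha$-approximation for MFC), and $w_{\mathcal{X}}(\hat T)\le \alpha\gamma\, w_{\mathcal{X}}(T_{\mathcal{X}})$ where $T_{\mathcal{X}}$ is a minimum spanning tree of $G_{\mathcal{X}}$ (i.e. it is an $(\alpha\gamma)$-approximation for metric MST).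
   Context: $(\mathcal{X},d)$ is a finite metric space, $\mathcal{X}=\{x_1,\dots,x_n\}$, and $G_{\mathcal{X}}$ is the complete graph on $\mathcal{X}$ with edge weights $w_{\mathcal{X}}(u,v)=d(u,v)$; for an edge set $F$, $w_{\mathcal{X}}(F)=\sum_{e\in F}w_{\mathcal{X}}(e)$. For $A,B\subseteq\mathcal{X}$, $d(A,B)=\min_{a\in A,b\in B}d(a,b)$. An initial forest consists of a partition $\mathcal{P}=\{P_1,\dots,P_t\}$ of $\mathcal{X}$ and, for each $i$, a spanning tree $T_i$ of the complete graph on $P_i$; $E_t$ is the union of the edge sets of the $T_i$. The Metric Forest Completion (MFC) problem is: find a minimum-weight spanning tree of $G_{\mathcal{X}}$ whose edge set contains $E_t$. Overlap parameter: let $\mathcal{T}_{\mathcal{X}}$ be the set of minimum spanning trees of $G_{\mathcal{X}}$ and for $T\in\mathcal{T}_{\mathcal{X}}$ let $T(\mathcal{P})$ be the set of edges of $T$ whose two endpoints lie in the same part of $\mathcal{P}$; then $\gamma(\mathcal{P})=w_{\mathcal{X}}(E_t)/\max_{T\in\mathcal{T}_{\mathcal{X}}}w_{\mathcal{X}}(T(\mathcal{P}))$. Cost: $\mathrm{cost}(P_i,R_i)=\max_{x\in P_i}\min_{r\in R_i}d(x,r)$ and $\mathrm{cost}(\mathcal{P},R)=\sum_{i=1}^t\mathrm{cost}(P_i,R_i)$. Algorithm $\textsf{MultiRepMFC}(R)$: for each pair $i\ne j$ in $[t]$ set $\hat w(v_i,v_j)=\min\{d(P_i,R_j),d(P_j,R_i)\}$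 and record a pair of points $(x,y)$ attaining this minimum; compute a minimum spanning tree $\hat T_{\mathcal{P}}$ of the complete graph on nodes $v_1,\dots,v_t$ with weights $\hat w$; return the spanning tree $\hat T$ of $G_{\mathcal{X}}$ consisting of $E_t$ together with the recorded point pairs corresponding to the edges of $\hat T_{\mathcal{P}}$. *)

theory Defs
  imports Complex_Main
begin

definition metric_on :: "'a set \<Rightarrow> ('a \<Rightarrow> 'a \<Rightarrow> real) \<Rightarrow> bool" where
  "metric_on X d \<longleftrightarrow>
     (\<forall>x\<in>X. \<forall>y\<in>X. d x y = 0 \<longleftrightarrow> x = y) \<and>
     (\<forall>x\<in>X. \<forall>y\<in>X. d x y = d y x) \<and>
     (\<forall>x\<in>X. \<forall>y\<in>X. \<forall>z\<in>X. d x z \<le> d x y + d y z)"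

definition setdist :: "('a \<Rightarrow> 'a \<Rightarrow> real) \<Rightarrow> 'a set \<Rightarrow> 'a set \<Rightarrow> real" where
  "setdist d A B = Min {d a b | a b. a \<in> A \<and> b \<in> B}"

definition edges_on :: "'v set \<Rightarrow> 'v set set \<Rightarrow> bool" where
  "edges_on V F \<longleftrightarrow> (\<forall>e\<in>F. \<exists>u v. u \<in> V \<and> v \<in> V \<and> u \<noteq> v \<and> e = {u, v})"

definition adj :: "'v set set \<Rightarrow> ('v \<times> 'v) set" where
  "adj F = {(x, y). {x, y} \<in> F}"

definition connected_on :: "'v set \<Rightarrow> 'v set set \<Rightarrow> bool" where
  "connected_on V F \<longleftrightarrow> (\<forall>u\<in>V. \<forall>v\<in>V. (u, v) \<in> (adj F)\<^sup>*)"

definition acyclic_edges :: "'v set set \<Rightarrow> bool" where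
  "acyclic_edges F \<longleftrightarrow> (\<forall>e\<in>F. \<forall>u v. e = {u, v} \<longrightarrow> (u, v) \<notin> (adj (F - {e}))\<^sup>*)"

definition spanning_tree :: "'v set \<Rightarrow> 'v set set \<Rightarrow> bool" where
  "spanning_tree V F \<longleftrightarrow> edges_on V F \<and> connected_on V F \<and> acyclic_edges F"

text \<open>Weight of an edge {u,v} of the complete graph with weights c (c symmetric).\<close>
definition edge_weight :: "('v \<Rightarrow> 'v \<Rightarrow> real) \<Rightarrow> 'v set \<Rightarrow> real" where
  "edge_weight c e = (SOME r. \<exists>u v. e = {u, v} \<and> r = c u v)"

definition weight :: "('v \<Rightarrow> 'v \<Rightarrow> real) \<Rightarrow> 'v set set \<Rightarrow> real" where
  "weight c F = (\<Sum>e\<in>F. edge_weight c e)"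

definition is_mst :: "'v set \<Rightarrow> ('v \<Rightarrow> 'v \<Rightarrow> real) \<Rightarrow> 'v set set \<Rightarrow> bool" where
  "is_mst V c F \<longleftrightarrow> spanning_tree V F \<and> (\<forall>F'. spanning_tree V F' \<longrightarrow> weight c F \<le> weight c F')"

definition initial_forest ::
  "'a set \<Rightarrow> nat \<Rightarrow> (nat \<Rightarrow> 'a set) \<Rightarrow> (nat \<Rightarrow> 'a set set) \<Rightarrow> bool" where
  "initial_forest X t P T \<longleftrightarrow>
     (\<forall>i<t. P i \<noteq> {}) \<and>
     (\<forall>i<t. \<forall>j<t. i \<noteq> j \<longrightarrow> P i \<inter> P j = {}) \<and>
     (\<Union>i<t. P i) = X \<and>
     (\<forall>i<t. spanning_tree (P i) (T i))"

definition forest_edges :: "nat \<Rightarrow> (nat \<Rightarrow> 'a set set) \<Rightarrow> 'a set set" where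
  "forest_edges t T = (\<Union>i<t. T i)"

definition mfc_optimal ::
  "'a set \<Rightarrow> ('a \<Rightarrow> 'a \<Rightarrow> real) \<Rightarrow> 'a set set \<Rightarrow> 'a set set \<Rightarrow> bool" where
  "mfc_optimal X d Et F \<longleftrightarrow>
     spanning_tree X F \<and> Et \<subseteq> F \<and>
     (\<forall>F'. spanning_tree X F' \<and> Et \<subseteq> F' \<longrightarrow> weight d F \<le> weight d F')"

definition intra_edges :: "nat \<Rightarrow> (nat \<Rightarrow> 'a set) \<Rightarrow> 'a set set \<Rightarrow> 'a set set" where
  "intra_edges t P F = {e \<in> F. \<exists>i<t. e \<subseteq> P i}"

definition max_intra_mst_weight ::
  "'a set \<Rightarrow> ('a \<Rightarrow> 'a \<Rightarrow> real) \<Rightarrow> nat \<Rightarrow> (nat \<Rightarrow> 'a set) \<Rightarrow> real" where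
  "max_intra_mst_weight X d t P = Max {weight d (intra_edges t P F) | F. is_mst X d F}"

definition overlap_gamma ::
  "'a set \<Rightarrow> ('a \<Rightarrow> 'a \<Rightarrow> real) \<Rightarrow> nat \<Rightarrow> (nat \<Rightarrow> 'a set) \<Rightarrow> (nat \<Rightarrow> 'a set set) \<Rightarrow> real" where
  "overlap_gamma X d t P T = weight d (forest_edges t T) / max_intra_mst_weight X d t P"

definition part_cost :: "('a \<Rightarrow> 'a \<Rightarrow> real) \<Rightarrow> 'a set \<Rightarrow> 'a set \<Rightarrow> real" where
  "part_cost d Pi Ri = Max ((\<lambda>x. Min ((\<lambda>r. d x r) ` Ri)) ` Pi)"

definition total_cost :: "('a \<Rightarrow> 'a \<Rightarrow> real) \<Rightarrow> nat \<Rightarrow> (nat \<Rightarrow> 'a set) \<Rightarrow> (nat \<Rightarrow> 'a set) \<Rightarrow> real" where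
  "total_cost d t P R = (\<Sum>i<t. part_cost d (P i) (R i))"

definition hat_w ::
  "('a \<Rightarrow> 'a \<Rightarrow> real) \<Rightarrow> (nat \<Rightarrow> 'a set) \<Rightarrow> (nat \<Rightarrow> 'a set) \<Rightarrow> nat \<Rightarrow> nat \<Rightarrow> real" where
  "hat_w d P R i j = min (setdist d (P i) (R j)) (setdist d (P j) (R i))"

text \<open>That is a possible output of MultiRepMFC(R) (for some choice of the recorded
  minimizing pairs and of the MST of the contracted graph; ties arbitrary).\<close>
definition multirep_output ::
  "('a \<Rightarrow> 'a \<Rightarrow> real) \<Rightarrow> nat \<Rightarrow> (nat \<Rightarrow> 'a set) \<Rightarrow> (nat \<Rightarrow> 'a set set) \<Rightarrow> (nat \<Rightarrow> 'a set)
     \<Rightarrow> 'a set set \<Rightarrow> bool" where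
  "multirep_output d t P T R That \<longleftrightarrow>
     (\<exists>(pr :: nat set \<Rightarrow> 'a \<times> 'a) (TP :: nat set set).
        (\<forall>i<t. \<forall>j<t. i \<noteq> j \<longrightarrow>
           (let (x, y) = pr {i, j} in
              ((x \<in> P i \<and> y \<in> R j) \<or> (x \<in> P j \<and> y \<in> R i)) \<and> d x y = hat_w d P R i j)) \<and>
        is_mst {..<t} (hat_w d P R) TP \<and>
        That = forest_edges t T \<union> {{fst (pr e), snd (pr e)} | e. e \<in> TP})"

end

(* MultiRepMFC pays w(E_t) for the initial forest plus the weight of a minimum spanning tree
   of the contracted graph on the parts.  Given any connected spanning edge set H of X, grow a
   tree over the parts along the edges of H that cross between parts, as in Prim's algorithm:
   the edge {x, y} that attaches a new part P_j can be replaced by the contracted edge it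
   witnesses, whose weight is at most d(x, y) + cost(P_j, R_j) (move y to its nearest
   representative).  So w(That) <= w(E_t) + w(crossing edges of H) + cost(P, R).
   For H = Tstar the intra-part edges contain E_t, so w(That) <= w(Tstar) + cost(P, R), which is
   at most alpha w(Tstar).  For H an MST whose intra-part weight M is maximal, exchanging those
   edges for E_t keeps H connected, so M <= w(E_t), and then
   w(That) <= w(E_t) + w(TX) - M + cost(P, R) <= alpha gamma w(TX). *)

theory Submission
  imports Defs
begin

lemma edge_weight_doubleton:
  assumes "c u v = c v u"
  shows "edge_weight c {u, v} = c u v"
proof -
  have "\<exists>r u' v'. {u, v} = {u', v'} \<and> r = c u' v'" by blast
  from someI_ex[OF this] obtain u' v' where "{u, v} = {u', v'}" "edge_weight c {u, v} = c u' v'"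
    unfolding edge_weight_def by blast
  then show ?thesis using assms by (auto simp: doubleton_eq_iff)
qed

lemma finite_edges_on: "finite V \<Longrightarrow> edges_on V F \<Longrightarrow> finite F"
  unfolding edges_on_def by (rule finite_subset[of F "Pow V"]) auto

lemma edges_on_subset: "edges_on V F \<Longrightarrow> F' \<subseteq> F \<Longrightarrow> edges_on V F'"
  unfolding edges_on_def by blast

lemma edges_on_Un: "edges_on V F \<Longrightarrow> edges_on V F' \<Longrightarrow> edges_on V (F \<union> F')"
  unfolding edges_on_def by blast

lemma edges_on_insert_edge:
  "edges_on V F \<Longrightarrow> u \<in> V \<Longrightarrow> u \<noteq> v \<Longrightarrow> edges_on (insert v V) (insert {u, v} F)"
  unfolding edges_on_def by blast

lemma edge_weight_nonneg:
  assumes "edges_on V F" "e \<in> F"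
    and "\<And>u v. u \<in> V \<Longrightarrow> v \<in> V \<Longrightarrow> c u v = c v u"
    and "\<And>u v. u \<in> V \<Longrightarrow> v \<in> V \<Longrightarrow> 0 \<le> c u v"
  shows "0 \<le> edge_weight c e"
proof -
  obtain u v where "u \<in> V" "v \<in> V" "e = {u, v}"
    using assms(1,2) unfolding edges_on_def by blast
  then show ?thesis using assms(3,4) edge_weight_doubleton[of c u v] by simp
qed

lemma weight_insert: "finite F \<Longrightarrow> e \<notin> F \<Longrightarrow> weight c (insert e F) = edge_weight c e + weight c F"
  unfolding weight_def by simp

lemma weight_Diff: "finite F \<Longrightarrow> F' \<subseteq> F \<Longrightarrow> weight c (F - F') = weight c F - weight c F'"
  unfolding weight_def by (simp add: sum_diff)

lemma weight_mono:
  assumes "finite F" "F' \<subseteq> F" "\<forall>e\<in>F. 0 \<le> edge_weight c e"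
  shows "weight c F' \<le> weight c F"
  unfolding weight_def using assms by (intro sum_mono2) auto

lemma weight_Un_le:
  assumes "finite F" "finite F'" "\<forall>e\<in>F \<union> F'. 0 \<le> edge_weight c e"
  shows "weight c (F \<union> F') \<le> weight c F + weight c F'"
proof -
  have "0 \<le> weight c (F \<inter> F')"
    unfolding weight_def using assms(3) by (intro sum_nonneg) auto
  then show ?thesis
    unfolding weight_def using assms(1,2) by (simp add: sum_Un)
qed

lemma weight_image_le:
  assumes "finite F" "\<forall>e\<in>f ` F. 0 \<le> edge_weight c e"
  shows "weight c (f ` F) \<le> (\<Sum>e\<in>F. edge_weight c (f e))"
  unfolding weight_def using sum_image_le[OF assms(1), of "edge_weight c" f] assms(2)
  by (simp add: comp_def)

lemma sym_adj: "sym (adj F)"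
  unfolding adj_def sym_def by (simp add: insert_commute)

lemma rtrancl_adj_sym: "(x, y) \<in> (adj F)\<^sup>* \<Longrightarrow> (y, x) \<in> (adj F)\<^sup>*"
  using sym_rtrancl[OF sym_adj] by (rule symD)

lemma adj_mono: "F \<subseteq> F' \<Longrightarrow> adj F \<subseteq> adj F'"
  unfolding adj_def by auto

lemma connected_on_if_adj_subset:
  "connected_on V F \<Longrightarrow> adj F \<subseteq> (adj F')\<^sup>* \<Longrightarrow> connected_on V F'"
  unfolding connected_on_def using rtrancl_subset_rtrancl by blast

lemma connected_on_insert_edge:
  assumes "connected_on V F" "u \<in> V"
  shows "connected_on (insert v V) (insert {u, v} F)"
proof -
  let ?F = "insert {u, v} F"
  have "(w, u) \<in> (adj ?F)\<^sup>*" if "w \<in> insert v V" for w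
  proof (cases "w = v")
    case True
    then show ?thesis by (auto simp: adj_def insert_commute)
  next
    case False
    then have "(w, u) \<in> (adj F)\<^sup>*" using assms that unfolding connected_on_def by simp
    then show ?thesis using rtrancl_mono[OF adj_mono[OF subset_insertI]] by blast
  qed
  then show ?thesis
    unfolding connected_on_def by (blast intro: rtrancl_trans rtrancl_adj_sym)
qed

lemma rtrancl_exits_set:
  assumes "(a, b) \<in> r\<^sup>*" "a \<in> Q" "b \<notin> Q"
  shows "\<exists>x y. (x, y) \<in> r \<and> x \<in> Q \<and> y \<notin> Q"
  using assms by (induction rule: rtrancl_induct) auto

lemma connected_on_has_spanning_tree:
  assumes "finite H" "edges_on V H" "connected_on V H"
  shows "\<exists>S\<subseteq>H. spanning_tree V S"
proof -
  let ?Q = "\<lambda>S. S \<subseteq> H \<and> connected_on V S"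
  obtain S where QS: "?Q S" and minimal: "\<And>S'. ?Q S' \<Longrightarrow> card S \<le> card S'"
    using ex_has_least_nat[of ?Q H card] assms(3) by auto
  have "acyclic_edges S"
    unfolding acyclic_edges_def
  proof (intro ballI allI impI notI)
    fix e u v assume e: "e \<in> S" "e = {u, v}" and uv: "(u, v) \<in> (adj (S - {e}))\<^sup>*"
    have "adj S \<subseteq> (adj (S - {e}))\<^sup>*"
      using uv rtrancl_adj_sym[OF uv] e(2)
      by (auto simp: adj_def doubleton_eq_iff intro: r_into_rtrancl)
    then have "connected_on V (S - {e})" using QS connected_on_if_adj_subset by blast
    then have "card S \<le> card (S - {e})" using QS by (intro minimal) auto
    moreover have "finite S" using QS assms(1) finite_subset by blast
    then have "card (S - {e}) < card S" using e(1) by (rule card_Diff1_less)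
    ultimately show False by linarith
  qed
  then show ?thesis using QS edges_on_subset[OF assms(2)] unfolding spanning_tree_def by blast
qed

lemma is_mst_weight_le:
  assumes "is_mst V c F" "finite H" "edges_on V H" "connected_on V H"
    and "\<And>u v. u \<in> V \<Longrightarrow> v \<in> V \<Longrightarrow> c u v = c v u"
    and "\<And>u v. u \<in> V \<Longrightarrow> v \<in> V \<Longrightarrow> 0 \<le> c u v"
  shows "weight c F \<le> weight c H"
proof -
  obtain S where S: "S \<subseteq> H" "spanning_tree V S"
    using connected_on_has_spanning_tree[OF assms(2-4)] by blast
  have "weight c F \<le> weight c S" using assms(1) S(2) unfolding is_mst_def by blast
  also have "\<dots> \<le> weight c H"
    using assms(2,5,6) S(1) edge_weight_nonneg[OF assms(3)] by (intro weight_mono) auto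
  finally show ?thesis .
qed

lemma pair_dists_eq_image: "{d a b | a b. a \<in> A \<and> b \<in> B} = case_prod d ` (A \<times> B)"
  by force

lemma setdist_le:
  assumes "finite A" "finite B" "a \<in> A" "b \<in> B"
  shows "setdist d A B \<le> d a b"
  unfolding setdist_def pair_dists_eq_image using assms by (intro Min_le) auto

lemma setdist_nonneg:
  assumes "finite A" "finite B" "A \<noteq> {}" "B \<noteq> {}" "\<And>a b. a \<in> A \<Longrightarrow> b \<in> B \<Longrightarrow> 0 \<le> d a b"
  shows "0 \<le> setdist d A B"
  unfolding setdist_def pair_dists_eq_image using assms by (subst Min_ge_iff) auto

lemma hat_w_sym: "hat_w d P R i j = hat_w d P R j i"
  unfolding hat_w_def by (simp add: min.commute)

lemma max_intra_mst_weight_attained: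
  assumes "finite X" "is_mst X d F"
  shows "\<exists>F0. is_mst X d F0 \<and> max_intra_mst_weight X d t P = weight d (intra_edges t P F0)"
proof -
  let ?W = "{weight d (intra_edges t P F) | F. is_mst X d F}"
  have "F' \<subseteq> Pow X" if "is_mst X d F'" for F'
    using that unfolding is_mst_def spanning_tree_def edges_on_def by auto
  then have "?W \<subseteq> (\<lambda>F. weight d (intra_edges t P F)) ` Pow (Pow X)" by blast
  then have "finite ?W" using assms(1) by (simp add: finite_subset)
  moreover have "?W \<noteq> {}" using assms(2) by blast
  ultimately have "Max ?W \<in> ?W" by (rule Max_in)
  then show ?thesis unfolding max_intra_mst_weight_def by blast
qed

locale metric_forest =
  fixes X :: "'a set" and d :: "'a \<Rightarrow> 'a \<Rightarrow> real"
    and t :: nat and P :: "nat \<Rightarrow> 'a set" and T :: "nat \<Rightarrow> 'a set set"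
  assumes finite_X: "finite X" and metric: "metric_on X d"
    and forest: "initial_forest X t P T"
begin

lemma d_sym: "x \<in> X \<Longrightarrow> y \<in> X \<Longrightarrow> d x y = d y x"
  using metric unfolding metric_on_def by blast

lemma d_triangle: "x \<in> X \<Longrightarrow> y \<in> X \<Longrightarrow> z \<in> X \<Longrightarrow> d x z \<le> d x y + d y z"
  using metric unfolding metric_on_def by blast

lemma d_nonneg:
  assumes "x \<in> X" "y \<in> X"
  shows "0 \<le> d x y"
proof -
  have "d x x = 0" using assms(1) metric unfolding metric_on_def by blast
  then show ?thesis using d_triangle[of x y x] d_sym[of x y] assms by linarith
qed

lemma edge_weight_d: "x \<in> X \<Longrightarrow> y \<in> X \<Longrightarrow> edge_weight d {x, y} = d x y"
  by (simp add: edge_weight_doubleton d_sym)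

lemma edge_weight_d_nonneg: "edges_on X F \<Longrightarrow> e \<in> F \<Longrightarrow> 0 \<le> edge_weight d e"
  using edge_weight_nonneg d_sym d_nonneg by blast

lemma part_subset: "i < t \<Longrightarrow> P i \<subseteq> X"
  using forest unfolding initial_forest_def by blast

lemma part_nonempty: "i < t \<Longrightarrow> P i \<noteq> {}"
  using forest unfolding initial_forest_def by blast

lemma finite_part: "i < t \<Longrightarrow> finite (P i)"
  using part_subset finite_X finite_subset by blast

lemma part_unique: "i < t \<Longrightarrow> j < t \<Longrightarrow> x \<in> P i \<Longrightarrow> x \<in> P j \<Longrightarrow> i = j"
  using forest unfolding initial_forest_def by blast

lemma part_cover: "x \<in> X \<Longrightarrow> \<exists>i<t. x \<in> P i"
  using forest unfolding initial_forest_def by blast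

lemma spanning_tree_part: "i < t \<Longrightarrow> spanning_tree (P i) (T i)"
  using forest unfolding initial_forest_def by blast

lemma forest_edge_within_part:
  assumes "e \<in> forest_edges t T"
  obtains i u v where "i < t" "u \<in> P i" "v \<in> P i" "u \<noteq> v" "e = {u, v}"
proof -
  obtain i where "i < t" "e \<in> T i" using assms unfolding forest_edges_def by blast
  moreover have "edges_on (P i) (T i)" using spanning_tree_part[OF \<open>i < t\<close>] by (simp add: spanning_tree_def)
  ultimately obtain u v where "u \<in> P i" "v \<in> P i" "u \<noteq> v" "e = {u, v}"
    unfolding edges_on_def by blast
  then show ?thesis using that \<open>i < t\<close> by blast
qed

lemma forest_edges_on: "edges_on X (forest_edges t T)"
  unfolding edges_on_def
proof
  fix e assume "e \<in> forest_edges t T"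
  then obtain i u v where "i < t" "u \<in> P i" "v \<in> P i" "u \<noteq> v" "e = {u, v}"
    by (rule forest_edge_within_part)
  then show "\<exists>u v. u \<in> X \<and> v \<in> X \<and> u \<noteq> v \<and> e = {u, v}"
    using part_subset[OF \<open>i < t\<close>] by blast
qed

lemma forest_edges_subset_intra_edges:
  assumes "forest_edges t T \<subseteq> F"
  shows "forest_edges t T \<subseteq> intra_edges t P F"
proof
  fix e assume "e \<in> forest_edges t T"
  then obtain i u v where "i < t" "u \<in> P i" "v \<in> P i" "e = {u, v}"
    by (rule forest_edge_within_part)
  then have "e \<subseteq> P i" by simp
  then show "e \<in> intra_edges t P F"
    using assms \<open>i < t\<close> \<open>e \<in> forest_edges t T\<close> unfolding intra_edges_def by blast
qed

lemma crossing_edge_not_intra: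
  assumes "i < t" "j < t" "i \<noteq> j" "x \<in> P i" "y \<in> P j"
  shows "{x, y} \<notin> intra_edges t P H"
proof
  assume "{x, y} \<in> intra_edges t P H"
  then obtain l where "l < t" "x \<in> P l" "y \<in> P l" unfolding intra_edges_def by auto
  then show False using part_unique[of l i x] part_unique[of l j y] assms by simp
qed

lemma part_disjoint_UN:
  assumes "A \<subseteq> {..<t}" "j < t" "j \<notin> A" "y \<in> P j"
  shows "y \<notin> (\<Union>i\<in>A. P i)"
proof
  assume "y \<in> (\<Union>i\<in>A. P i)"
  then obtain i where "i \<in> A" "y \<in> P i" by blast
  then have "i = j" using part_unique[of i j y] assms by blast
  then show False using \<open>i \<in> A\<close> assms(3) by simp
qed

lemma exists_edge_leaving_parts:
  assumes H: "edges_on X H" "connected_on X H"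
    and A: "A \<subseteq> {..<t}" "i0 \<in> A" "j0 < t" "j0 \<notin> A"
  shows "\<exists>i j x y. i \<in> A \<and> j < t \<and> j \<notin> A \<and> x \<in> P i \<and> y \<in> P j \<and> {x, y} \<in> H"
proof -
  have "i0 < t" using A by blast
  obtain a b where a: "a \<in> P i0" and b: "b \<in> P j0"
    using part_nonempty[OF \<open>i0 < t\<close>] part_nonempty[OF \<open>j0 < t\<close>] by blast
  have "a \<in> X" "b \<in> X"
    using a b part_subset[OF \<open>i0 < t\<close>] part_subset[OF \<open>j0 < t\<close>] by blast+
  then have ab: "(a, b) \<in> (adj H)\<^sup>*" using H(2) unfolding connected_on_def by blast
  have a_in: "a \<in> (\<Union>i\<in>A. P i)" using a A(2) by blast
  have b_out: "b \<notin> (\<Union>i\<in>A. P i)" using part_disjoint_UN[OF A(1,3,4) b] .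
  obtain x y where xy: "(x, y) \<in> adj H" "x \<in> (\<Union>i\<in>A. P i)" "y \<notin> (\<Union>i\<in>A. P i)"
    using rtrancl_exits_set[OF ab a_in b_out] by blast
  then have "{x, y} \<in> H" by (simp add: adj_def)
  then have "y \<in> X" using H(1) unfolding edges_on_def by (auto simp: doubleton_eq_iff)
  then obtain j where "j < t" "y \<in> P j" using part_cover by blast
  then show ?thesis using xy \<open>{x, y} \<in> H\<close> by blast
qed

text \<open>A partial run of Prim's algorithm on the contracted graph: S connects the parts indexed
  by A, and its weight is paid for by crossing edges G of H plus the charge a j of every part
  j \<in> A, each part being charged once, when it is attached.\<close>

definition charged_subgraph ::
  "'a set set \<Rightarrow> (nat \<Rightarrow> nat \<Rightarrow> real) \<Rightarrow> (nat \<Rightarrow> real) \<Rightarrow> nat set \<Rightarrow> nat set set \<Rightarrow> 'a set set \<Rightarrow> bool"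
  where "charged_subgraph H c a A S G \<longleftrightarrow>
    A \<subseteq> {..<t} \<and> edges_on A S \<and> connected_on A S \<and>
    G \<subseteq> H - intra_edges t P H \<and> \<Union>G \<subseteq> (\<Union>i\<in>A. P i) \<and> weight c S \<le> weight d G + sum a A"

lemma charged_subgraph_extend:
  fixes c :: "nat \<Rightarrow> nat \<Rightarrow> real" and a :: "nat \<Rightarrow> real"
  assumes H: "edges_on X H" "connected_on X H"
    and c_sym: "\<And>i j. c i j = c j i"
    and c_le: "\<And>i j x y. i < t \<Longrightarrow> j < t \<Longrightarrow> x \<in> P i \<Longrightarrow> y \<in> P j \<Longrightarrow> c i j \<le> d x y + a j"
    and charged: "charged_subgraph H c a A S G"
    and "i0 \<in> A" "j0 < t" "j0 \<notin> A"
  obtains j S' G' where "j \<notin> A" "charged_subgraph H c a (insert j A) S' G'"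
proof -
  have A: "A \<subseteq> {..<t}" and S: "edges_on A S" "connected_on A S"
    and G: "G \<subseteq> H - intra_edges t P H" "\<Union>G \<subseteq> (\<Union>i\<in>A. P i)"
    and W: "weight c S \<le> weight d G + sum a A"
    using charged unfolding charged_subgraph_def by blast+
  obtain i j x y where ij: "i \<in> A" "j < t" "j \<notin> A" "x \<in> P i" "y \<in> P j" "{x, y} \<in> H"
    using exists_edge_leaving_parts[OF H A assms(6-8)] by blast
  have "i < t" "i \<noteq> j" using ij(1,3) A by auto
  have "x \<in> X" "y \<in> X" using ij(2,4,5) \<open>i < t\<close> part_subset by blast+
  have "{x, y} \<notin> G" using G(2) part_disjoint_UN[OF A ij(2,3,5)] by blast
  have "{i, j} \<notin> S" using S(1) ij(3) unfolding edges_on_def by (auto simp: doubleton_eq_iff)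
  have "finite A" using A finite_subset by blast
  have "finite S" using finite_edges_on[OF \<open>finite A\<close> S(1)] .
  have "finite G" using G(1) finite_edges_on[OF finite_X H(1)] finite_subset by blast
  have "c i j \<le> d x y + a j" using c_le[OF \<open>i < t\<close> ij(2,4,5)] .
  then have "weight c (insert {i, j} S) \<le> weight d (insert {x, y} G) + sum a (insert j A)"
    using W \<open>finite S\<close> \<open>finite G\<close> \<open>finite A\<close> \<open>{i, j} \<notin> S\<close> \<open>{x, y} \<notin> G\<close> ij(3)
    by (simp add: weight_insert edge_weight_doubleton[of c, OF c_sym]
        edge_weight_d[OF \<open>x \<in> X\<close> \<open>y \<in> X\<close>])
  moreover have "insert {x, y} G \<subseteq> H - intra_edges t P H"
    using G(1) ij(6) crossing_edge_not_intra[OF \<open>i < t\<close> ij(2) \<open>i \<noteq> j\<close> ij(4,5)] by blast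
  moreover have "\<Union>(insert {x, y} G) \<subseteq> (\<Union>i\<in>insert j A. P i)"
    using G(2) ij(1,4,5) by blast
  ultimately have "charged_subgraph H c a (insert j A) (insert {i, j} S) (insert {x, y} G)"
    unfolding charged_subgraph_def
    using A ij(2) edges_on_insert_edge[OF S(1) ij(1) \<open>i \<noteq> j\<close>]
      connected_on_insert_edge[OF S(2) ij(1)] by blast
  then show ?thesis using that ij(3) by blast
qed

lemma charged_subgraph_exists:
  fixes c :: "nat \<Rightarrow> nat \<Rightarrow> real" and a :: "nat \<Rightarrow> real"
  assumes H: "edges_on X H" "connected_on X H"
    and c_sym: "\<And>i j. c i j = c j i"
    and c_le: "\<And>i j x y. i < t \<Longrightarrow> j < t \<Longrightarrow> x \<in> P i \<Longrightarrow> y \<in> P j \<Longrightarrow> c i j \<le> d x y + a j"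
    and a_nonneg: "\<And>j. j < t \<Longrightarrow> 0 \<le> a j"
    and "k < t"
  shows "\<exists>A S G. card A = Suc k \<and> charged_subgraph H c a A S G"
  using \<open>k < t\<close>
proof (induction k)
  case 0
  then have "charged_subgraph H c a {0} {} {}"
    unfolding charged_subgraph_def by (auto simp: edges_on_def connected_on_def weight_def a_nonneg)
  then show ?case by force
next
  case (Suc k)
  then obtain A S G where "card A = Suc k" and charged: "charged_subgraph H c a A S G"
    by auto
  then have "A \<subseteq> {..<t}" "finite A" unfolding charged_subgraph_def using finite_subset by auto
  obtain i0 where "i0 \<in> A" using \<open>card A = Suc k\<close> by (metis card_gt_0_iff ex_in_conv zero_less_Suc)
  have "A \<noteq> {..<t}" using \<open>card A = Suc k\<close> Suc.prems by auto
  then obtain j0 where "j0 < t" "j0 \<notin> A" using \<open>A \<subseteq> {..<t}\<close> by blast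
  obtain j S' G' where "j \<notin> A" "charged_subgraph H c a (insert j A) S' G'"
    using charged_subgraph_extend[OF H c_sym c_le charged \<open>i0 \<in> A\<close> \<open>j0 < t\<close> \<open>j0 \<notin> A\<close>] .
  moreover have "card (insert j A) = Suc (Suc k)"
    using \<open>card A = Suc k\<close> \<open>finite A\<close> \<open>j \<notin> A\<close> by simp
  ultimately show ?case by blast
qed

lemma contracted_connected_bound:
  fixes c :: "nat \<Rightarrow> nat \<Rightarrow> real" and a :: "nat \<Rightarrow> real"
  assumes H: "edges_on X H" "connected_on X H"
    and c_sym: "\<And>i j. c i j = c j i"
    and c_le: "\<And>i j x y. i < t \<Longrightarrow> j < t \<Longrightarrow> x \<in> P i \<Longrightarrow> y \<in> P j \<Longrightarrow> c i j \<le> d x y + a j"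
    and a_nonneg: "\<And>j. j < t \<Longrightarrow> 0 \<le> a j"
  shows "\<exists>S. edges_on {..<t} S \<and> connected_on {..<t} S
      \<and> weight c S \<le> weight d (H - intra_edges t P H) + (\<Sum>j<t. a j)"
proof -
  have crossing_weight_mono: "weight d G \<le> weight d (H - intra_edges t P H)"
    if "G \<subseteq> H - intra_edges t P H" for G
    using that finite_edges_on[OF finite_X H(1)] edge_weight_d_nonneg[OF H(1)]
    by (intro weight_mono) auto
  show ?thesis
  proof (cases "t = 0")
    case True
    then show ?thesis
      using crossing_weight_mono[of "{}"]
      by (intro exI[of _ "{}"]) (auto simp: edges_on_def connected_on_def weight_def)
  next
    case False
    then obtain A S G where A: "A \<subseteq> {..<t}" "card A = t"
      and S: "edges_on A S" "connected_on A S" "weight c S \<le> weight d G + sum a A"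
      and G: "G \<subseteq> H - intra_edges t P H"
      using charged_subgraph_exists[OF H, where c = c and a = a and k = "t - 1"] c_sym c_le a_nonneg
      unfolding charged_subgraph_def by auto
    have "A = {..<t}" using A by (intro card_subset_eq) auto
    then show ?thesis using S crossing_weight_mono[OF G] by (intro exI[of _ S]) auto
  qed
qed

lemma connected_on_replace_intra_edges:
  assumes "connected_on X H"
  shows "connected_on X ((H - intra_edges t P H) \<union> forest_edges t T)"
proof (rule connected_on_if_adj_subset[OF assms], rule subsetI)
  let ?H = "(H - intra_edges t P H) \<union> forest_edges t T"
  fix z assume "z \<in> adj H"
  then obtain x y where z: "z = (x, y)" "{x, y} \<in> H" by (auto simp: adj_def)
  show "z \<in> (adj ?H)\<^sup>*"
  proof (cases "{x, y} \<in> intra_edges t P H")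
    case True
    then obtain i where "i < t" "{x, y} \<subseteq> P i" unfolding intra_edges_def by blast
    then have "(x, y) \<in> (adj (T i))\<^sup>*"
      using spanning_tree_part[of i] unfolding spanning_tree_def connected_on_def by simp
    moreover have "T i \<subseteq> ?H" using \<open>i < t\<close> unfolding forest_edges_def by auto
    ultimately show ?thesis using z(1) rtrancl_mono[OF adj_mono] by blast
  next
    case False
    then show ?thesis using z by (auto simp: adj_def)
  qed
qed

lemma intra_mst_weight_le_forest_weight:
  assumes "is_mst X d F"
  shows "weight d (intra_edges t P F) \<le> weight d (forest_edges t T)"
proof -
  let ?H = "(F - intra_edges t P F) \<union> forest_edges t T"
  have F: "edges_on X F" "connected_on X F" using assms unfolding is_mst_def spanning_tree_def by auto
  then have "finite F" using finite_edges_on finite_X by blast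
  have H: "edges_on X ?H"
    using edges_on_Un[OF edges_on_subset[OF F(1)] forest_edges_on] by blast
  then have "finite ?H" using finite_edges_on finite_X by blast
  have "weight d F \<le> weight d ?H"
    using is_mst_weight_le[OF assms \<open>finite ?H\<close> H connected_on_replace_intra_edges[OF F(2)]]
      d_sym d_nonneg by blast
  also have "\<dots> \<le> weight d (F - intra_edges t P F) + weight d (forest_edges t T)"
    using \<open>finite ?H\<close> edge_weight_d_nonneg[OF H] by (intro weight_Un_le) auto
  also have "weight d (F - intra_edges t P F) = weight d F - weight d (intra_edges t P F)"
    using \<open>finite F\<close> by (intro weight_Diff) (auto simp: intra_edges_def)
  finally show ?thesis by simp
qed

end

locale multirep_instance = metric_forest +
  fixes R :: "nat \<Rightarrow> 'a set"
  assumes representatives: "\<forall>i<t. R i \<subseteq> P i \<and> R i \<noteq> {}"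
begin

lemma rep_subset: "i < t \<Longrightarrow> R i \<subseteq> P i"
  using representatives by blast

lemma rep_nonempty: "i < t \<Longrightarrow> R i \<noteq> {}"
  using representatives by blast

lemma finite_rep: "i < t \<Longrightarrow> finite (R i)"
  using rep_subset finite_part finite_subset by blast

lemma exists_rep_within_part_cost:
  assumes "i < t" "x \<in> P i"
  shows "\<exists>r\<in>R i. d x r \<le> part_cost d (P i) (R i)"
proof -
  obtain r where "r \<in> R i" and r: "d x r = Min ((\<lambda>r. d x r) ` R i)"
    using Min_in[of "(\<lambda>r. d x r) ` R i"] finite_rep rep_nonempty assms(1) by fastforce
  moreover have "Min ((\<lambda>r. d x r) ` R i) \<le> part_cost d (P i) (R i)"
    unfolding part_cost_def using finite_part assms by (intro Max_ge) auto
  ultimately show ?thesis by (metis order.trans order.refl)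
qed

lemma part_cost_nonneg:
  assumes "i < t"
  shows "0 \<le> part_cost d (P i) (R i)"
proof -
  obtain x where "x \<in> P i" using part_nonempty assms by blast
  then obtain r where "r \<in> R i" "d x r \<le> part_cost d (P i) (R i)"
    using exists_rep_within_part_cost assms by blast
  moreover have "x \<in> X" "r \<in> X"
    using \<open>x \<in> P i\<close> \<open>r \<in> R i\<close> rep_subset part_subset assms by blast+
  ultimately show ?thesis using d_nonneg by fastforce
qed

lemma total_cost_nonneg: "0 \<le> total_cost d t P R"
  unfolding total_cost_def using part_cost_nonneg by (intro sum_nonneg) simp

lemma hat_w_nonneg:
  assumes "i < t" "j < t"
  shows "0 \<le> hat_w d P R i j"
proof -
  have "0 \<le> setdist d (P i) (R j)" if "i < t" "j < t" for i j
  proof (rule setdist_nonneg)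
    show "0 \<le> d x r" if "x \<in> P i" "r \<in> R j" for x r
      using that \<open>i < t\<close> \<open>j < t\<close> rep_subset part_subset d_nonneg by blast
  qed (use that finite_part finite_rep part_nonempty rep_nonempty in auto)
  then show ?thesis using assms unfolding hat_w_def by simp
qed

lemma hat_w_le_dist_plus_part_cost:
  assumes "i < t" "j < t" "x \<in> P i" "y \<in> P j"
  shows "hat_w d P R i j \<le> d x y + part_cost d (P j) (R j)"
proof -
  obtain r where r: "r \<in> R j" "d y r \<le> part_cost d (P j) (R j)"
    using exists_rep_within_part_cost assms(2,4) by blast
  have "x \<in> X" "y \<in> X" "r \<in> X"
    using assms r(1) rep_subset part_subset by blast+
  have "hat_w d P R i j \<le> setdist d (P i) (R j)" unfolding hat_w_def by simp
  also have "\<dots> \<le> d x r" using finite_part finite_rep assms r(1) by (intro setdist_le) auto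
  also have "\<dots> \<le> d x y + d y r" using d_triangle \<open>x \<in> X\<close> \<open>y \<in> X\<close> \<open>r \<in> X\<close> by blast
  finally show ?thesis using r(2) by linarith
qed

lemma contracted_mst_weight_le:
  assumes "is_mst {..<t} (hat_w d P R) TP" "edges_on X H" "connected_on X H"
  shows "weight (hat_w d P R) TP \<le> weight d (H - intra_edges t P H) + total_cost d t P R"
proof -
  have "\<exists>S. edges_on {..<t} S \<and> connected_on {..<t} S \<and>
      weight (hat_w d P R) S \<le> weight d (H - intra_edges t P H) + (\<Sum>j<t. part_cost d (P j) (R j))"
    by (rule contracted_connected_bound[OF assms(2,3)])
      (auto simp: hat_w_sym hat_w_le_dist_plus_part_cost part_cost_nonneg)
  then obtain S where S: "edges_on {..<t} S" "connected_on {..<t} S"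
    and "weight (hat_w d P R) S \<le> weight d (H - intra_edges t P H) + total_cost d t P R"
    unfolding total_cost_def by blast
  moreover have "weight (hat_w d P R) TP \<le> weight (hat_w d P R) S"
    by (rule is_mst_weight_le[OF assms(1) finite_edges_on[OF _ S(1)] S])
      (auto simp: hat_w_sym hat_w_nonneg)
  ultimately show ?thesis by linarith
qed

lemma multirep_output_weight_le:
  assumes "multirep_output d t P T R That"
  obtains TP where "is_mst {..<t} (hat_w d P R) TP"
    and "weight d That \<le> weight d (forest_edges t T) + weight (hat_w d P R) TP"
proof -
  obtain pr TP where pr: "\<forall>i<t. \<forall>j<t. i \<noteq> j \<longrightarrow>
        (let (x, y) = pr {i, j} in
          ((x \<in> P i \<and> y \<in> R j) \<or> (x \<in> P j \<and> y \<in> R i)) \<and> d x y = hat_w d P R i j)"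
    and mst: "is_mst {..<t} (hat_w d P R) TP"
    and That: "That = forest_edges t T \<union> {{fst (pr e), snd (pr e)} | e. e \<in> TP}"
    using assms unfolding multirep_output_def by blast
  let ?f = "\<lambda>e. {fst (pr e), snd (pr e)}"
  have TP: "edges_on {..<t} TP" using mst unfolding is_mst_def spanning_tree_def by blast
  have recorded_pair: "fst (pr e) \<in> X \<and> snd (pr e) \<in> X
      \<and> edge_weight d (?f e) = edge_weight (hat_w d P R) e" if "e \<in> TP" for e
  proof -
    obtain i j where ij: "i < t" "j < t" "i \<noteq> j" "e = {i, j}"
      using TP \<open>e \<in> TP\<close> unfolding edges_on_def by blast
    then have ends: "(fst (pr e) \<in> P i \<and> snd (pr e) \<in> R j) \<or> (fst (pr e) \<in> P j \<and> snd (pr e) \<in> R i)"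
      and dist: "d (fst (pr e)) (snd (pr e)) = hat_w d P R i j"
      using pr by (simp_all add: Let_def split_beta)
    have "R i \<subseteq> X" "R j \<subseteq> X" "P i \<subseteq> X" "P j \<subseteq> X"
      using ij rep_subset part_subset by blast+
    then have "fst (pr e) \<in> X" "snd (pr e) \<in> X" using ends by blast+
    moreover have "edge_weight (hat_w d P R) e = hat_w d P R i j"
      using ij(4) edge_weight_doubleton[of "hat_w d P R", OF hat_w_sym] by simp
    ultimately show ?thesis using edge_weight_d dist by simp
  qed
  have finite_TP: "finite TP" using finite_edges_on[OF _ TP] by simp
  have nonneg: "\<forall>e\<in>forest_edges t T \<union> ?f ` TP. 0 \<le> edge_weight d e"
    using edge_weight_d_nonneg[OF forest_edges_on] recorded_pair edge_weight_d d_nonneg by auto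
  have "weight d That \<le> weight d (forest_edges t T) + weight d (?f ` TP)"
    unfolding That Setcompr_eq_image
    using finite_edges_on[OF finite_X forest_edges_on] finite_TP nonneg by (intro weight_Un_le) auto
  also have "weight d (?f ` TP) \<le> (\<Sum>e\<in>TP. edge_weight d (?f e))"
    using finite_TP nonneg by (intro weight_image_le) auto
  also have "\<dots> = weight (hat_w d P R) TP"
    unfolding weight_def using recorded_pair by simp
  finally show ?thesis using that mst by simp
qed

lemma multirep_output_weight_le_crossing:
  assumes "multirep_output d t P T R That" "edges_on X H" "connected_on X H"
  shows "weight d That
    \<le> weight d (forest_edges t T) + weight d (H - intra_edges t P H) + total_cost d t P R"
proof -
  obtain TP where "is_mst {..<t} (hat_w d P R) TP"
    and "weight d That \<le> weight d (forest_edges t T) + weight (hat_w d P R) TP"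
    using multirep_output_weight_le[OF assms(1)] .
  then show ?thesis using contracted_mst_weight_le[OF _ assms(2,3)] by fastforce
qed

lemma multirep_mfc_approx:
  assumes "0 < weight d (forest_edges t T)" "multirep_output d t P T R That"
    and "mfc_optimal X d (forest_edges t T) Tstar"
  shows "weight d That
    \<le> (1 + total_cost d t P R / weight d (forest_edges t T)) * weight d Tstar"
proof -
  define E C W where "E = weight d (forest_edges t T)" and "C = total_cost d t P R"
    and "W = weight d Tstar"
  have opt: "spanning_tree X Tstar" "forest_edges t T \<subseteq> Tstar"
    using assms(3) unfolding mfc_optimal_def by auto
  then have Tstar: "edges_on X Tstar" "connected_on X Tstar" unfolding spanning_tree_def by auto
  have "finite Tstar" using finite_edges_on[OF finite_X Tstar(1)] .
  note Tstar_nonneg = edge_weight_d_nonneg[OF Tstar(1)]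
  have "weight d (Tstar - intra_edges t P Tstar) \<le> weight d (Tstar - forest_edges t T)"
    using forest_edges_subset_intra_edges[OF opt(2)] \<open>finite Tstar\<close> Tstar_nonneg
    by (intro weight_mono) auto
  also have "\<dots> = W - E"
    unfolding W_def E_def using \<open>finite Tstar\<close> opt(2) by (rule weight_Diff)
  finally have "weight d That \<le> W + C"
    using multirep_output_weight_le_crossing[OF assms(2) Tstar] unfolding E_def C_def by linarith
  moreover have "E \<le> W"
    unfolding E_def W_def using \<open>finite Tstar\<close> opt(2) Tstar_nonneg by (intro weight_mono) auto
  then have "C / E * E \<le> C / E * W"
    using total_cost_nonneg assms(1) unfolding C_def E_def by (intro mult_left_mono) auto
  then have "C \<le> C / E * W" using assms(1) unfolding E_def by simp
  ultimately show ?thesis unfolding E_def [symmetric] C_def [symmetric] W_def [symmetric]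
    by (simp add: algebra_simps)
qed

lemma multirep_mst_approx:
  assumes "0 < weight d (forest_edges t T)" "multirep_output d t P T R That"
    and "is_mst X d TX" "0 < max_intra_mst_weight X d t P"
  shows "weight d That
    \<le> (1 + total_cost d t P R / weight d (forest_edges t T)) * overlap_gamma X d t P T * weight d TX"
proof -
  define E C M W where "E = weight d (forest_edges t T)" and "C = total_cost d t P R"
    and "M = max_intra_mst_weight X d t P" and "W = weight d TX"
  obtain F where F: "is_mst X d F" and M: "M = weight d (intra_edges t P F)"
    using max_intra_mst_weight_attained[OF finite_X assms(3)] unfolding M_def by blast
  have "weight d F = W"
    using F assms(3) unfolding W_def is_mst_def by (simp add: order_antisym)
  have F_edges: "edges_on X F" "connected_on X F"
    using F unfolding is_mst_def spanning_tree_def by auto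
  have "finite F" using finite_edges_on[OF finite_X F_edges(1)] .
  have intra_F: "intra_edges t P F \<subseteq> F" unfolding intra_edges_def by blast
  have "weight d (F - intra_edges t P F) = W - M"
    using weight_Diff[OF \<open>finite F\<close> intra_F] \<open>weight d F = W\<close> M by simp
  then have That: "weight d That \<le> E + (W - M) + C"
    using multirep_output_weight_le_crossing[OF assms(2) F_edges] unfolding E_def C_def by simp
  have "M \<le> E" using intra_mst_weight_le_forest_weight[OF F] M unfolding E_def by simp
  moreover have "M \<le> W"
    using weight_mono[OF \<open>finite F\<close> intra_F, of d] edge_weight_d_nonneg[OF F_edges(1)]
      M \<open>weight d F = W\<close> by simp
  moreover have "0 \<le> C" unfolding C_def by (rule total_cost_nonneg)
  ultimately have "0 \<le> (E + C - M) * (W - M)" by simp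
  moreover have "(E + C) * W - (E + (W - M) + C) * M = (E + C - M) * (W - M)"
    by (simp add: algebra_simps)
  ultimately have "(E + (W - M) + C) * M \<le> (E + C) * W" by linarith
  then have "E + (W - M) + C \<le> (E + C) / M * W"
    using assms(4) unfolding M_def by (simp add: pos_le_divide_eq mult.commute)
  also have "(E + C) / M = (1 + C / E) * overlap_gamma X d t P T"
    using assms(1,4) unfolding overlap_gamma_def E_def M_def by (simp add: field_simps)
  finally show ?thesis using That unfolding E_def C_def W_def by simp
qed

end

theorem theorem1:
  fixes X :: "'a set" and d :: "'a \<Rightarrow> 'a \<Rightarrow> real"
    and t :: nat and P :: "nat \<Rightarrow> 'a set" and T :: "nat \<Rightarrow> 'a set set"
    and R :: "nat \<Rightarrow> 'a set" and That Tstar TX :: "'a set set"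
  assumes "finite X" and "metric_on X d"
    and "initial_forest X t P T"
    and "weight d (forest_edges t T) > 0"
    and "\<forall>i<t. R i \<subseteq> P i \<and> R i \<noteq> {}"
    and "multirep_output d t P T R That"
    and "mfc_optimal X d (forest_edges t T) Tstar"
    and "is_mst X d TX"
  shows "weight d That
           \<le> (1 + total_cost d t P R / weight d (forest_edges t T)) * weight d Tstar
         \<and> (max_intra_mst_weight X d t P > 0 \<longrightarrow>
         weight d That
           \<le> (1 + total_cost d t P R / weight d (forest_edges t T))
              * overlap_gamma X d t P T * weight d TX)"
proof -
  interpret multirep_instance X d t P T R
    using assms(1-3,5) by unfold_locales
  show ?thesis
    using multirep_mfc_approx[OF assms(4,6,7)] multirep_mst_approx[OF assms(4,6,8)] by blast
qed

end
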